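(* Let $\ell:X^N\to\mathbb R$ be Borel measurable. For $\alpha=(\alpha_\pi)_{\pi\in\mathcal S_N}$ in the simplex $\Delta^{\mathcal S_N}=\{\alpha\in[0,1]^{\mathcal S_N}:\sum_\pi\alpha_\pi=1\}$ let $F_\alpha(\ell)=\sum_{\pi\in\mathcal S_N}\alpha_\pi\,\ell\circ\pi$. Then $$\inf_{\alpha\in\Delta^{\mathcal S_N}}U(F_\alpha(\ell))=\min_{\alpha\in\Delta^{\mathcal S_N}}U(F_\alpha(\ell))=U(\ell_{\mathrm{sym}}),$$ i.e. the infimum is attained at the uniform weights $\alpha_\pi=1/N!$.
   Context: $X$ is a nonempty Polish space, $c$ a proper transportation cost (lower semi-continuous, symmetric, $c(x,x)=0$, weak triangle inequality $c(x,y)\le K(c(x,z)+c(z,y))$, compact sublevel sets $\{x:c(x_0,x)\le r\}$), $\hat P$ a Borel probability measure with $\int c(x_0,\cdot)d\hat P<\infty$, $\rho>0$, $N\in\mathbb N$. $c^N(x,y)=\sum_{i=1}^Nc(x_i,y_i)$ and $\mathbb B^{c^N}_{N\rho}(\hat P^{\otimes N})$ is the set of Borel probability measures $\bar P$ on $X^N$ with finite $c^N$-moment and $W_{c^N}(\bar P,\hat P^{\otimes N})\le N\rho$, where $W$ denotes the optimal transport cost. For Borel $g:X^N\to\mathbb R$, $U(g)=\sup_{\bar P\in\mathbb B^{c^N}_{N\rho}(\hat P^{\otimes N})}\mathbb E_{\bar P}g$ (possibly $+\infty$). $\mathcal S_N$ is the symmetric group, identified with coordinate permutations $\pi(x)=(x_{\pi(1)},\dots,x_{\pi(N)})$;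 $\ell_{\mathrm{sym}}(x)=\frac1{N!}\sum_{\pi\in\mathcal S_N}\ell(\pi(x))$. *)

theory Defs
  imports "HOL-Probability.Probability"
begin

text \<open>Proper transportation cost on a Polish space (type class polish_space).
  Lower semicontinuity = all sublevel sets closed in X \<times> X.\<close>
definition proper_cost :: "('a::polish_space \<Rightarrow> 'a \<Rightarrow> real) \<Rightarrow> 'a \<Rightarrow> bool" where
  "proper_cost c x0 \<longleftrightarrow>
     (\<forall>t. closed {p. c (fst p) (snd p) \<le> t}) \<and>
     (\<forall>x y. c x y = c y x) \<and>
     (\<forall>x. c x x = 0) \<and>
     (\<exists>K>0. \<forall>x y z. c x y \<le> K * (c x z + c z y)) \<and>
     (\<forall>r. compact {x. c x0 x \<le> r})"

definition prodX :: "nat \<Rightarrow> (nat \<Rightarrow> 'a::topological_space) measure" where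
  "prodX N = PiM {..<N} (\<lambda>_. borel)"

definition costN :: "('a \<Rightarrow> 'a \<Rightarrow> real) \<Rightarrow> nat \<Rightarrow> (nat \<Rightarrow> 'a) \<Rightarrow> (nat \<Rightarrow> 'a) \<Rightarrow> real" where
  "costN c N x y = (\<Sum>i<N. c (x i) (y i))"

definition couplings :: "'a measure \<Rightarrow> 'b measure \<Rightarrow> ('a \<times> 'b) measure set" where
  "couplings M1 M2 = {\<gamma>. sets \<gamma> = sets (M1 \<Otimes>\<^sub>M M2) \<and> prob_space \<gamma> \<and>
       distr \<gamma> M1 fst = M1 \<and> distr \<gamma> M2 snd = M2}"

definition OT_cost :: "('a \<Rightarrow> 'b \<Rightarrow> real) \<Rightarrow> 'a measure \<Rightarrow> 'b measure \<Rightarrow> ennreal" where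
  "OT_cost cst M1 M2 = (INF \<gamma>\<in>couplings M1 M2. \<integral>\<^sup>+ p. ennreal (cst (fst p) (snd p)) \<partial>\<gamma>)"

definition ballN :: "('a::polish_space \<Rightarrow> 'a \<Rightarrow> real) \<Rightarrow> 'a \<Rightarrow> 'a measure \<Rightarrow> real \<Rightarrow> nat
     \<Rightarrow> (nat \<Rightarrow> 'a) measure set" where
  "ballN c x0 Ph \<rho> N = {Pb. sets Pb = sets (prodX N) \<and> prob_space Pb \<and>
      (\<integral>\<^sup>+ y. ennreal (costN c N (\<lambda>_. x0) y) \<partial>Pb) < \<infinity> \<and>
      OT_cost (costN c N) Pb (PiM {..<N} (\<lambda>_. Ph)) \<le> ennreal (real N * \<rho>)}"

text \<open>Extended expectation E[g] = E[g^+] - E[g^-], with the convention \<infinity> - \<infinity> = \<infinity>.\<close>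
definition expect :: "'a measure \<Rightarrow> ('a \<Rightarrow> real) \<Rightarrow> ereal" where
  "expect M g = (let p = (\<integral>\<^sup>+ x. ennreal (g x) \<partial>M); n = (\<integral>\<^sup>+ x. ennreal (- g x) \<partial>M) in
     if p = \<infinity> then \<infinity> else enn2ereal p - enn2ereal n)"

definition Uval :: "('a::polish_space \<Rightarrow> 'a \<Rightarrow> real) \<Rightarrow> 'a \<Rightarrow> 'a measure \<Rightarrow> real \<Rightarrow> nat
     \<Rightarrow> ((nat \<Rightarrow> 'a) \<Rightarrow> real) \<Rightarrow> ereal" where
  "Uval c x0 Ph \<rho> N g = (SUP Pb\<in>ballN c x0 Ph \<rho> N. expect Pb g)"

definition SymN :: "nat \<Rightarrow> (nat \<Rightarrow> nat) set" where
  "SymN N = {\<pi>. \<pi> permutes {..<N}}"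

text \<open>pi(x) = (x_{pi 1},...,x_{pi N}) corresponds to x \<circ> pi.\<close>
definition Falpha :: "nat \<Rightarrow> ((nat \<Rightarrow> nat) \<Rightarrow> real) \<Rightarrow> ((nat \<Rightarrow> 'a) \<Rightarrow> real) \<Rightarrow> (nat \<Rightarrow> 'a) \<Rightarrow> real" where
  "Falpha N \<alpha> l x = (\<Sum>\<pi>\<in>SymN N. \<alpha> \<pi> * l (x \<circ> \<pi>))"

definition simplexS :: "nat \<Rightarrow> ((nat \<Rightarrow> nat) \<Rightarrow> real) set" where
  "simplexS N = {\<alpha>. (\<forall>\<pi>\<in>SymN N. 0 \<le> \<alpha> \<pi> \<and> \<alpha> \<pi> \<le> 1) \<and> (\<Sum>\<pi>\<in>SymN N. \<alpha> \<pi>) = 1}"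

definition lsym :: "nat \<Rightarrow> ((nat \<Rightarrow> 'a) \<Rightarrow> real) \<Rightarrow> (nat \<Rightarrow> 'a) \<Rightarrow> real" where
  "lsym N l x = (1 / fact N) * (\<Sum>\<pi>\<in>SymN N. l (x \<circ> \<pi>))"

end

(*
  For every measure Pb in the Wasserstein ball, averaging F_alpha(l) over all coordinate
  permutations gives l_sym, and the extended expectation is subadditive and positively
  homogeneous; hence E_Pb l_sym <= (1/N!) sum_sigma E_{sigma#Pb} F_alpha(l).  The ball is
  invariant under the push-forwards sigma#: permuting both arguments leaves c^N unchanged,
  the product measure Phat^N is permutation invariant, and so couplings can be permuted.
  Therefore U(l_sym) <= U(F_alpha(l)) for every alpha, with equality at the uniform weights,
  where F_alpha(l) = l_sym.
*)
theory Submission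
  imports Defs
begin

lemma ennreal_add_balance:
  fixes a b :: real
  shows "ennreal (a + b) + ennreal (- a) + ennreal (- b) = ennreal (- (a + b)) + ennreal a + ennreal b"
  by (cases "0 \<le> a"; cases "0 \<le> b"; cases "0 \<le> a + b") (simp_all add: ennreal_neg flip: ennreal_plus)

lemma ennreal_add_le: "ennreal ((a::real) + b) \<le> ennreal a + ennreal b"
  by (simp add: ennreal_plus_if ennreal_leI)

lemma ereal_diff_le_of_balance:
  fixes p n p1 n1 p2 n2 :: ereal
  assumes "0 \<le> n" "0 \<le> n1" "0 \<le> n2" "\<bar>p\<bar> \<noteq> \<infinity>" "\<bar>p1\<bar> \<noteq> \<infinity>" "\<bar>p2\<bar> \<noteq> \<infinity>"
    and balance: "p + n1 + n2 = n + p1 + p2"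
  shows "p - n \<le> (p1 - n1) + (p2 - n2)"
proof -
  obtain a a1 a2 where "p = ereal a" "p1 = ereal a1" "p2 = ereal a2"
    using assms(4-6) by (cases p; cases p1; cases p2) auto
  then show ?thesis
    using assms(1-3) balance by (cases n; cases n1; cases n2) auto
qed

lemma expect_add_le:
  assumes f: "f \<in> borel_measurable M" and g: "g \<in> borel_measurable M"
  shows "expect M (\<lambda>x. f x + g x) \<le> expect M f + expect M g"
proof -
  define pos where "pos h = (\<integral>\<^sup>+ x. ennreal (h x) \<partial>M)" for h :: "_ \<Rightarrow> real"
  define neg where "neg h = (\<integral>\<^sup>+ x. ennreal (- h x) \<partial>M)" for h :: "_ \<Rightarrow> real"
  let ?h = "\<lambda>x. f x + g x"
  have expect_parts: "expect M h = (if pos h = \<infinity> then \<infinity> else enn2ereal (pos h) - enn2ereal (neg h))" for h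
    unfolding expect_def pos_def neg_def by simp
  have balance: "pos ?h + neg f + neg g = neg ?h + pos f + pos g"
    using f g by (simp add: pos_def neg_def nn_integral_add[symmetric] ennreal_add_balance)
  have "pos ?h \<le> pos f + pos g"
    unfolding pos_def using f g by (simp add: nn_integral_add[symmetric] nn_integral_mono ennreal_add_le)
  show ?thesis
  proof (cases "pos f = \<infinity> \<or> pos g = \<infinity>")
    case True
    then show ?thesis by (auto simp: expect_parts)
  next
    case False
    with \<open>pos ?h \<le> pos f + pos g\<close> have "pos ?h \<noteq> \<infinity>"
      by (metis ennreal_add_eq_top infinity_ennreal_def top.extremum_unique)
    have "enn2ereal (pos ?h) - enn2ereal (neg ?h)
        \<le> (enn2ereal (pos f) - enn2ereal (neg f)) + (enn2ereal (pos g) - enn2ereal (neg g))"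
      by (rule ereal_diff_le_of_balance)
        (use False \<open>pos ?h \<noteq> \<infinity>\<close> balance in \<open>simp_all add: plus_ennreal.rep_eq[symmetric]\<close>)
    with False \<open>pos ?h \<noteq> \<infinity>\<close> show ?thesis by (simp add: expect_parts)
  qed
qed

lemma expect_cmult:
  assumes r: "r > 0" and f: "f \<in> borel_measurable M"
  shows "expect M (\<lambda>x. r * f x) = ereal r * expect M f"
proof -
  define p where "p = (\<integral>\<^sup>+ x. ennreal (f x) \<partial>M)"
  define n where "n = (\<integral>\<^sup>+ x. ennreal (- f x) \<partial>M)"
  have "(\<integral>\<^sup>+ x. ennreal (r * f x) \<partial>M) = ennreal r * p"
    unfolding p_def using r f by (simp add: ennreal_mult' nn_integral_cmult)
  moreover have "ennreal (- (r * f x)) = ennreal r * ennreal (- f x)" for x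
    using r ennreal_mult'[of r "- f x"] by simp
  then have "(\<integral>\<^sup>+ x. ennreal (- (r * f x)) \<partial>M) = ennreal r * n"
    unfolding n_def using f by (simp add: nn_integral_cmult)
  ultimately have scaled: "expect M (\<lambda>x. r * f x)
      = (if ennreal r * p = \<infinity> then \<infinity> else enn2ereal (ennreal r * p) - enn2ereal (ennreal r * n))"
    by (simp add: expect_def)
  have unscaled: "expect M f = (if p = \<infinity> then \<infinity> else enn2ereal p - enn2ereal n)"
    by (simp add: expect_def p_def n_def)
  consider "p = \<infinity>" | a where "p = ennreal a" "0 \<le> a" "n = \<infinity>"
    | a b where "p = ennreal a" "0 \<le> a" "n = ennreal b" "0 \<le> b"
    by (cases p; cases n) auto
  then show ?thesis
  proof cases
    case 1
    then show ?thesis using r by (simp add: scaled unscaled ennreal_mult_eq_top_iff)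
  next
    case 2
    then show ?thesis using r by (simp add: scaled unscaled ennreal_mult_eq_top_iff ennreal_mult[symmetric])
  next
    case 3
    then show ?thesis using r by (simp add: scaled unscaled ennreal_mult[symmetric] right_diff_distrib)
  qed
qed

lemma expect_cong: "(\<And>x. x \<in> space M \<Longrightarrow> f x = g x) \<Longrightarrow> expect M f = expect M g"
  unfolding expect_def by (simp cong: nn_integral_cong)

lemma expect_distr:
  assumes "T \<in> measurable M N" "f \<in> borel_measurable N"
  shows "expect (distr M N T) f = expect M (\<lambda>x. f (T x))"
  unfolding expect_def using assms by (simp add: nn_integral_distr)

lemma expect_sum_le:
  assumes "finite S" "\<And>i. i \<in> S \<Longrightarrow> f i \<in> borel_measurable M"
  shows "expect M (\<lambda>x. \<Sum>i\<in>S. f i x) \<le> (\<Sum>i\<in>S. expect M (f i))"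
  using assms
proof (induction S rule: finite_induct)
  case empty
  then show ?case by (simp add: expect_def zero_ennreal.rep_eq)
next
  case (insert a S)
  have "expect M (\<lambda>x. \<Sum>i\<in>insert a S. f i x) = expect M (\<lambda>x. f a x + (\<Sum>i\<in>S. f i x))"
    using insert by simp
  also have "\<dots> \<le> expect M (f a) + expect M (\<lambda>x. \<Sum>i\<in>S. f i x)"
    using insert by (intro expect_add_le) auto
  also have "\<dots> \<le> expect M (f a) + (\<Sum>i\<in>S. expect M (f i))"
    using insert by (intro add_left_mono) auto
  finally show ?case using insert by simp
qed

lemma couplings_distr:
  assumes \<gamma>: "\<gamma> \<in> couplings P Q" and T: "T \<in> measurable P M" and S: "S \<in> measurable Q M'"
  shows "distr \<gamma> (M \<Otimes>\<^sub>M M') (\<lambda>p. (T (fst p), S (snd p))) \<in> couplings (distr P M T) (distr Q M' S)"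
proof -
  let ?\<Phi> = "\<lambda>p. (T (fst p), S (snd p))"
  let ?\<gamma>' = "distr \<gamma> (M \<Otimes>\<^sub>M M') ?\<Phi>"
  have s\<gamma>: "sets \<gamma> = sets (P \<Otimes>\<^sub>M Q)" and "prob_space \<gamma>"
    and marg: "distr \<gamma> P fst = P" "distr \<gamma> Q snd = Q"
    using \<gamma> by (auto simp: couplings_def)
  have fst: "fst \<in> measurable \<gamma> P" and snd: "snd \<in> measurable \<gamma> Q"
    by (simp_all add: measurable_cong_sets[OF s\<gamma> refl])
  have \<Phi>: "?\<Phi> \<in> measurable \<gamma> (M \<Otimes>\<^sub>M M')"
    using T S by (simp add: measurable_cong_sets[OF s\<gamma> refl])
  have "distr ?\<gamma>' (distr P M T) fst = distr ?\<gamma>' M fst"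
    by (rule distr_cong) simp_all
  also have "\<dots> = distr \<gamma> M (T \<circ> fst)"
    using distr_distr[OF measurable_fst \<Phi>] by (simp add: comp_def)
  also have "\<dots> = distr P M T"
    using distr_distr[OF T fst] marg(1) by simp
  finally have fst_marg: "distr ?\<gamma>' (distr P M T) fst = distr P M T" .
  have "distr ?\<gamma>' (distr Q M' S) snd = distr ?\<gamma>' M' snd"
    by (rule distr_cong) simp_all
  also have "\<dots> = distr \<gamma> M' (S \<circ> snd)"
    using distr_distr[OF measurable_snd \<Phi>] by (simp add: comp_def)
  also have "\<dots> = distr Q M' S"
    using distr_distr[OF S snd] marg(2) by simp
  finally have snd_marg: "distr ?\<gamma>' (distr Q M' S) snd = distr Q M' S" .
  show ?thesis
    unfolding couplings_def
    using fst_marg snd_marg prob_space.prob_space_distr[OF \<open>prob_space \<gamma>\<close> \<Phi>] by simp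
qed

lemma OT_cost_distr_le:
  assumes T: "T \<in> measurable P M" and S: "S \<in> measurable Q M'"
    and cst: "(\<lambda>p. cst (fst p) (snd p)) \<in> borel_measurable (M \<Otimes>\<^sub>M M')"
  shows "OT_cost cst (distr P M T) (distr Q M' S) \<le> OT_cost (\<lambda>x y. cst (T x) (S y)) P Q"
  unfolding OT_cost_def
proof (rule INF_greatest)
  fix \<gamma> assume \<gamma>: "\<gamma> \<in> couplings P Q"
  let ?\<Phi> = "\<lambda>p. (T (fst p), S (snd p))"
  have \<Phi>: "?\<Phi> \<in> measurable \<gamma> (M \<Otimes>\<^sub>M M')"
    using \<gamma> T S by (simp add: couplings_def measurable_cong_sets[of \<gamma> "P \<Otimes>\<^sub>M Q"])
  have "(INF \<gamma>'\<in>couplings (distr P M T) (distr Q M' S). \<integral>\<^sup>+ p. ennreal (cst (fst p) (snd p)) \<partial>\<gamma>')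
      \<le> (\<integral>\<^sup>+ p. ennreal (cst (fst p) (snd p)) \<partial>distr \<gamma> (M \<Otimes>\<^sub>M M') ?\<Phi>)"
    by (rule INF_lower[OF couplings_distr[OF \<gamma> T S]])
  also have "\<dots> = (\<integral>\<^sup>+ p. ennreal (cst (T (fst p)) (S (snd p))) \<partial>\<gamma>)"
    using \<Phi> cst by (simp add: nn_integral_distr)
  finally show "(INF \<gamma>'\<in>couplings (distr P M T) (distr Q M' S). \<integral>\<^sup>+ p. ennreal (cst (fst p) (snd p)) \<partial>\<gamma>')
      \<le> (\<integral>\<^sup>+ p. ennreal (cst (T (fst p)) (S (snd p))) \<partial>\<gamma>)" .
qed

lemma proper_cost_measurable:
  assumes c: "proper_cost c x0" and f: "f \<in> borel_measurable M" and g: "g \<in> borel_measurable M"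
  shows "(\<lambda>x. c (f x) (g x)) \<in> borel_measurable M"
proof -
  have "closed {p. c (fst p) (snd p) \<le> t}" for t
    using c unfolding proper_cost_def by blast
  then have "(\<lambda>p. c (fst p) (snd p)) \<in> borel_measurable borel"
    by (auto simp: borel_measurable_iff_le borel_closed)
  then have "(\<lambda>p. c (fst p) (snd p)) \<in> borel_measurable (borel \<Otimes>\<^sub>M borel)"
    by (simp add: borel_prod)
  from measurable_compose[OF measurable_Pair[OF f g] this] show ?thesis by simp
qed

lemma costN_measurable:
  assumes c: "proper_cost c x0"
    and f: "\<And>i. i < N \<Longrightarrow> (\<lambda>x. f x i) \<in> borel_measurable M"
    and g: "\<And>i. i < N \<Longrightarrow> (\<lambda>x. g x i) \<in> borel_measurable M"
  shows "(\<lambda>x. costN c N (f x) (g x)) \<in> borel_measurable M"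
proof -
  have "(\<lambda>x. c (f x i) (g x i)) \<in> borel_measurable M" if "i < N" for i
    using proper_cost_measurable[OF c f[OF that] g[OF that]] .
  then show ?thesis
    unfolding costN_def by (intro borel_measurable_sum) auto
qed

text \<open>A point of \<^term>\<open>prodX N\<close> is extensional on \<^term>\<open>{..<N}\<close>, so \<^term>\<open>x \<circ> \<sigma>\<close> itself
  lies outside that space; restricting it gives a measurable self-map of \<^term>\<open>prodX N\<close>.\<close>

definition coord_perm :: "nat \<Rightarrow> (nat \<Rightarrow> nat) \<Rightarrow> (nat \<Rightarrow> 'a) \<Rightarrow> nat \<Rightarrow> 'a" where
  "coord_perm N \<sigma> x = (\<lambda>n\<in>{..<N}. x (\<sigma> n))"

lemma coord_perm_measurable:
  assumes "\<sigma> permutes {..<N}"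
  shows "coord_perm N \<sigma> \<in> measurable (PiM {..<N} (\<lambda>_. B)) (PiM {..<N} (\<lambda>_. B))"
  unfolding coord_perm_def
  using permutes_in_image[OF assms] by (intro measurable_restrict measurable_component_singleton) auto

lemma coord_perm_eq_comp:
  assumes "\<sigma> permutes {..<N}" "x \<in> space (PiM {..<N} (\<lambda>_. B))"
  shows "coord_perm N \<sigma> x = x \<circ> \<sigma>"
  using assms by (auto simp: coord_perm_def fun_eq_iff space_PiM PiE_def extensional_def permutes_not_in)

lemma costN_coord_perm:
  assumes "\<sigma> permutes {..<N}"
  shows "costN c N (coord_perm N \<sigma> x) (coord_perm N \<sigma> y) = costN c N x y"
proof -
  have "costN c N (coord_perm N \<sigma> x) (coord_perm N \<sigma> y) = (\<Sum>i<N. c (x (\<sigma> i)) (y (\<sigma> i)))"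
    unfolding costN_def coord_perm_def by simp
  also have "\<dots> = costN c N x y"
    unfolding costN_def by (subst sum.permute[OF assms]) (simp add: comp_def)
  finally show ?thesis .
qed

lemma sets_ballN: "Pb \<in> ballN c x0 Ph \<rho> N \<Longrightarrow> sets Pb = sets (prodX N)"
  by (simp add: ballN_def)

lemma ballN_coord_perm:
  fixes c :: "'a::polish_space \<Rightarrow> 'a \<Rightarrow> real"
  assumes c: "proper_cost c x0" and Ph_sets: "sets Ph = sets borel" and Ph_prob: "prob_space Ph"
    and \<sigma>: "\<sigma> permutes {..<N}" and P: "Pb \<in> ballN c x0 Ph \<rho> N"
  shows "distr Pb (prodX N) (coord_perm N \<sigma>) \<in> ballN c x0 Ph \<rho> N"
proof -
  let ?M = "prodX N :: (nat \<Rightarrow> 'a) measure"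
  let ?Q = "PiM {..<N} (\<lambda>_. Ph)"
  let ?T = "coord_perm N \<sigma> :: (nat \<Rightarrow> 'a) \<Rightarrow> _"
  have sP: "sets Pb = sets ?M" and "prob_space Pb"
    and moment: "(\<integral>\<^sup>+ y. ennreal (costN c N (\<lambda>_. x0) y) \<partial>Pb) < \<infinity>"
    and OT: "OT_cost (costN c N) Pb ?Q \<le> ennreal (real N * \<rho>)"
    using P unfolding ballN_def by auto
  have sQ: "sets ?Q = sets ?M"
    unfolding prodX_def using Ph_sets by (intro sets_PiM_cong) auto
  have TP: "?T \<in> measurable Pb ?M" and TQ: "?T \<in> measurable ?Q ?M"
    using coord_perm_measurable[OF \<sigma>, of borel] coord_perm_measurable[OF \<sigma>, of Ph]
    by (simp_all add: prodX_def measurable_cong_sets[OF sP[unfolded prodX_def] refl]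
        measurable_cong_sets[OF refl sQ[unfolded prodX_def]])
  have Q_invariant: "distr ?Q ?M ?T = ?Q"
  proof -
    have "distr ?Q ?Q ?T = ?Q"
      unfolding coord_perm_def using Ph_prob permutes_inj_on[OF \<sigma>] permutes_in_image[OF \<sigma>]
      by (intro distr_PiM_reindex) auto
    then show ?thesis by (simp add: distr_cong[OF refl sQ])
  qed
  have measurable_costs:
    "(\<lambda>y. costN c N (\<lambda>_. x0) y) \<in> borel_measurable ?M"
    "(\<lambda>p. costN c N (fst p) (snd p)) \<in> borel_measurable (?M \<Otimes>\<^sub>M ?M)"
    by (auto intro!: costN_measurable[OF c] simp: prodX_def)
  have "(\<integral>\<^sup>+ y. ennreal (costN c N (\<lambda>_. x0) y) \<partial>distr Pb ?M ?T)
      = (\<integral>\<^sup>+ y. ennreal (costN c N (?T (\<lambda>_. x0)) (?T y)) \<partial>Pb)"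
    using TP measurable_costs by (simp add: nn_integral_distr costN_def coord_perm_def)
  also have "\<dots> = (\<integral>\<^sup>+ y. ennreal (costN c N (\<lambda>_. x0) y) \<partial>Pb)"
    by (simp add: costN_coord_perm[OF \<sigma>])
  finally have moment': "(\<integral>\<^sup>+ y. ennreal (costN c N (\<lambda>_. x0) y) \<partial>distr Pb ?M ?T) < \<infinity>"
    using moment by simp
  have "OT_cost (costN c N) (distr Pb ?M ?T) ?Q = OT_cost (costN c N) (distr Pb ?M ?T) (distr ?Q ?M ?T)"
    by (simp add: Q_invariant)
  also have "\<dots> \<le> OT_cost (\<lambda>x y. costN c N (?T x) (?T y)) Pb ?Q"
    using TP TQ measurable_costs(2) by (rule OT_cost_distr_le)
  also have "\<dots> = OT_cost (costN c N) Pb ?Q"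
    by (simp add: costN_coord_perm[OF \<sigma>])
  finally have OT': "OT_cost (costN c N) (distr Pb ?M ?T) ?Q \<le> ennreal (real N * \<rho>)"
    using OT by simp
  show ?thesis
    unfolding ballN_def
    using moment' OT' prob_space.prob_space_distr[OF \<open>prob_space Pb\<close> TP] by simp
qed

lemma lsym_eq_mean_Falpha:
  assumes "(\<Sum>\<pi>\<in>SymN N. \<alpha> \<pi>) = 1"
  shows "lsym N l x = (\<Sum>\<sigma>\<in>SymN N. (1 / fact N) * Falpha N \<alpha> l (x \<circ> \<sigma>))"
proof -
  have right_invariant: "(\<Sum>\<sigma>\<in>SymN N. l (x \<circ> (\<sigma> \<circ> \<pi>))) = (\<Sum>\<sigma>\<in>SymN N. l (x \<circ> \<sigma>))"
    if "\<pi> \<in> SymN N" for \<pi>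
    using sum_permutations_compose_right[of \<pi> "{..<N}" "\<lambda>\<sigma>. l (x \<circ> \<sigma>)"] that
    by (simp add: SymN_def)
  have "(\<Sum>\<sigma>\<in>SymN N. Falpha N \<alpha> l (x \<circ> \<sigma>))
      = (\<Sum>\<pi>\<in>SymN N. \<alpha> \<pi> * (\<Sum>\<sigma>\<in>SymN N. l (x \<circ> (\<sigma> \<circ> \<pi>))))"
    unfolding Falpha_def by (subst sum.swap) (simp add: sum_distrib_left o_assoc)
  also have "\<dots> = (\<Sum>\<pi>\<in>SymN N. \<alpha> \<pi> * (\<Sum>\<sigma>\<in>SymN N. l (x \<circ> \<sigma>)))"
    by (intro sum.cong refl) (simp add: right_invariant)
  also have "\<dots> = (\<Sum>\<sigma>\<in>SymN N. l (x \<circ> \<sigma>))"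
    using assms by (simp add: sum_distrib_right[symmetric])
  finally show ?thesis
    unfolding lsym_def sum_distrib_left[symmetric] by simp
qed

lemma Falpha_measurable:
  assumes l: "l \<in> borel_measurable (prodX N)"
  shows "Falpha N \<alpha> l \<in> borel_measurable (prodX N)"
proof -
  have "(\<lambda>x. l (x \<circ> \<pi>)) \<in> borel_measurable (prodX N)" if "\<pi> \<in> SymN N" for \<pi>
  proof -
    have \<pi>: "\<pi> permutes {..<N}" using that by (simp add: SymN_def)
    have "(\<lambda>x. l (coord_perm N \<pi> x)) \<in> borel_measurable (prodX N)"
      using measurable_compose[OF coord_perm_measurable[OF \<pi>] l[unfolded prodX_def]]
      by (simp add: prodX_def)
    then show ?thesis
      by (rule measurable_cong[THEN iffD1, rotated]) (simp add: prodX_def coord_perm_eq_comp[OF \<pi>])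
  qed
  then show ?thesis
    unfolding Falpha_def by (intro borel_measurable_sum borel_measurable_times) auto
qed

lemma expect_coord_perm_le_Uval:
  fixes c :: "'a::polish_space \<Rightarrow> 'a \<Rightarrow> real"
  assumes c: "proper_cost c x0" and Ph_sets: "sets Ph = sets borel" and Ph_prob: "prob_space Ph"
    and \<sigma>: "\<sigma> permutes {..<N}" and P: "Pb \<in> ballN c x0 Ph \<rho> N"
    and g: "g \<in> borel_measurable (prodX N)"
  shows "expect Pb (\<lambda>x. g (coord_perm N \<sigma> x)) \<le> Uval c x0 Ph \<rho> N g"
proof -
  have "coord_perm N \<sigma> \<in> measurable Pb (prodX N)"
    using coord_perm_measurable[OF \<sigma>, of borel]
    by (simp add: measurable_cong_sets[OF sets_ballN[OF P] refl] prodX_def)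
  then have "expect Pb (\<lambda>x. g (coord_perm N \<sigma> x)) = expect (distr Pb (prodX N) (coord_perm N \<sigma>)) g"
    using g by (simp add: expect_distr)
  also have "\<dots> \<le> Uval c x0 Ph \<rho> N g"
    unfolding Uval_def by (rule SUP_upper[OF ballN_coord_perm[OF c Ph_sets Ph_prob \<sigma> P]])
  finally show ?thesis .
qed

lemma Uval_lsym_le_Uval_Falpha:
  fixes c :: "'a::polish_space \<Rightarrow> 'a \<Rightarrow> real"
  assumes c: "proper_cost c x0" and Ph_sets: "sets Ph = sets borel" and Ph_prob: "prob_space Ph"
    and l: "l \<in> borel_measurable (prodX N)" and \<alpha>: "(\<Sum>\<pi>\<in>SymN N. \<alpha> \<pi>) = 1"
  shows "Uval c x0 Ph \<rho> N (lsym N l) \<le> Uval c x0 Ph \<rho> N (Falpha N \<alpha> l)"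
  unfolding Uval_def[of c x0 Ph \<rho> N "lsym N l"]
proof (rule SUP_least)
  fix Pb assume P: "Pb \<in> ballN c x0 Ph \<rho> N"
  let ?g = "Falpha N \<alpha> l"
  let ?U = "Uval c x0 Ph \<rho> N ?g"
  let ?k = "1 / fact N :: real"
  have g: "?g \<in> borel_measurable (prodX N)"
    using l by (rule Falpha_measurable)
  have space_Pb: "space Pb = space (PiM {..<N} (\<lambda>_. borel))"
    using sets_eq_imp_space_eq[OF sets_ballN[OF P]] by (simp add: prodX_def)
  have g_perm: "(\<lambda>x. ?g (coord_perm N \<sigma> x)) \<in> borel_measurable Pb" if "\<sigma> \<in> SymN N" for \<sigma>
    using measurable_compose[OF coord_perm_measurable g[unfolded prodX_def]] that
    by (simp add: SymN_def measurable_cong_sets[OF sets_ballN[OF P] refl] prodX_def)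
  have "expect Pb (lsym N l) = expect Pb (\<lambda>x. \<Sum>\<sigma>\<in>SymN N. ?k * ?g (coord_perm N \<sigma> x))"
    using space_Pb
    by (intro expect_cong) (simp add: lsym_eq_mean_Falpha[OF \<alpha>] coord_perm_eq_comp SymN_def)
  also have "\<dots> \<le> (\<Sum>\<sigma>\<in>SymN N. expect Pb (\<lambda>x. ?k * ?g (coord_perm N \<sigma> x)))"
    using g_perm by (intro expect_sum_le) (auto simp: SymN_def finite_permutations)
  also have "\<dots> = (\<Sum>\<sigma>\<in>SymN N. ereal ?k * expect Pb (\<lambda>x. ?g (coord_perm N \<sigma> x)))"
    using g_perm by (intro sum.cong refl expect_cmult) auto
  also have "\<dots> \<le> (\<Sum>\<sigma>\<in>SymN N. ereal ?k * ?U)"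
    using expect_coord_perm_le_Uval[OF c Ph_sets Ph_prob _ P g]
    by (intro sum_mono ereal_mult_left_mono) (auto simp: SymN_def)
  also have "\<dots> = ?U"
    by (simp add: sum_ereal_left_distrib[symmetric] card_permutations SymN_def)
  finally show "expect Pb (lsym N l) \<le> ?U" .
qed

theorem mainTheorem6:
  fixes c :: "'a::polish_space \<Rightarrow> 'a \<Rightarrow> real" and x0 :: 'a
    and Ph :: "'a measure" and \<rho> :: real and N :: nat
    and l :: "(nat \<Rightarrow> 'a) \<Rightarrow> real"
  assumes cost: "proper_cost c x0"
    and Ph_sets: "sets Ph = sets borel" and Ph_prob: "prob_space Ph"
    and Ph_moment: "(\<integral>\<^sup>+ x. ennreal (c x0 x) \<partial>Ph) < \<infinity>"
    and rho: "\<rho> > 0" and N: "N \<ge> 1"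
    and meas: "l \<in> borel_measurable (prodX N)"
  shows "(\<lambda>_. 1 / fact N) \<in> simplexS N
    \<and> Uval c x0 Ph \<rho> N (Falpha N (\<lambda>_. 1 / fact N) l) = Uval c x0 Ph \<rho> N (lsym N l)
    \<and> (INF \<alpha>\<in>simplexS N. Uval c x0 Ph \<rho> N (Falpha N \<alpha> l)) = Uval c x0 Ph \<rho> N (lsym N l)"
proof -
  have uniform: "(\<lambda>_. 1 / fact N) \<in> simplexS N"
    unfolding simplexS_def SymN_def by (simp add: card_permutations divide_le_eq_1)
  have Falpha_uniform: "Falpha N (\<lambda>_. 1 / fact N) l = lsym N l"
    by (simp add: fun_eq_iff Falpha_def lsym_def sum_distrib_left)
  have "Uval c x0 Ph \<rho> N (lsym N l) \<le> Uval c x0 Ph \<rho> N (Falpha N \<alpha> l)" if "\<alpha> \<in> simplexS N" for \<alpha>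
    using that by (intro Uval_lsym_le_Uval_Falpha[OF cost Ph_sets Ph_prob meas]) (simp add: simplexS_def)
  then have "(INF \<alpha>\<in>simplexS N. Uval c x0 Ph \<rho> N (Falpha N \<alpha> l)) = Uval c x0 Ph \<rho> N (lsym N l)"
    using INF_lower[OF uniform, of "\<lambda>\<alpha>. Uval c x0 Ph \<rho> N (Falpha N \<alpha> l)"] Falpha_uniform
    by (intro antisym INF_greatest) auto
  with uniform Falpha_uniform show ?thesis by simp
qed

end
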